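(* Let $n,m$ be positive integers with $2(m+1)\le n$ and let $H$ be a graph. Then $$\gamma_{gr}(C_n^m\circ H)=\begin{cases}\left\lfloor \frac{n}{m+1}\right\rfloor (\gamma_{gr} (H)-(m+1))+n & \text{if } \gamma_{gr}(H)\geq m+1,\\ 2\gamma_{gr}(H)+n-(2m+2) & \text{if } \gamma_{gr}(H)\leq m.\end{cases}$$
   Context: $C_n^m$ has vertex set $[n]$, distinct vertices adjacent iff their distance in the cycle $1,2,\dots,n,1$ is at most $m$. The lexicographic product $G\circ H$ has vertex set $V(G)\times V(H)$, with $(g_1,h_1)$ adjacent to $(g_2,h_2)$ iff $g_1g_2\in E(G)$, or $g_1=g_2$ and $h_1h_2\in E(H)$. $\gamma_{gr}$ is the Grundy domination number: the maximum length of a sequence $(v_1,\dots,v_k)$ of distinct vertices whose set is dominating and such that each $N[v_i]\setminus\bigcup_{j<i}N[v_j]$ is non-empty ($N[\cdot]$ the closed neighborhood). *)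

theory Defs
  imports Main
begin

type_synonym 'a graph = "'a set \<times> ('a \<Rightarrow> 'a \<Rightarrow> bool)"

definition verts :: "'a graph \<Rightarrow> 'a set" where "verts G = fst G"
definition adj :: "'a graph \<Rightarrow> 'a \<Rightarrow> 'a \<Rightarrow> bool" where "adj G = snd G"

definition finite_simple_graph :: "'a graph \<Rightarrow> bool" where
  "finite_simple_graph G \<longleftrightarrow> finite (verts G) \<and>
     (\<forall>u v. adj G u v \<longrightarrow> u \<in> verts G \<and> v \<in> verts G) \<and>
     (\<forall>u v. adj G u v \<longrightarrow> adj G v u) \<and> (\<forall>v. \<not> adj G v v)"

definition closed_nbhd :: "'a graph \<Rightarrow> 'a \<Rightarrow> 'a set" where
  "closed_nbhd G v = insert v {u \<in> verts G. adj G v u}"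

definition grundy_dom_seq :: "'a graph \<Rightarrow> 'a list \<Rightarrow> bool" where
  "grundy_dom_seq G xs \<longleftrightarrow> distinct xs \<and> set xs \<subseteq> verts G \<and>
     (\<Union>v\<in>set xs. closed_nbhd G v) = verts G \<and>
     (\<forall>i < length xs. closed_nbhd G (xs ! i) - (\<Union>j<i. closed_nbhd G (xs ! j)) \<noteq> {})"

definition grundy_dom_number :: "'a graph \<Rightarrow> nat" where
  "grundy_dom_number G = Max (length ` {xs. grundy_dom_seq G xs})"

definition cycle_dist :: "nat \<Rightarrow> nat \<Rightarrow> nat \<Rightarrow> nat" where
  "cycle_dist n i j = min ((i + n - j) mod n) ((j + n - i) mod n)"

definition cycle_power :: "nat \<Rightarrow> nat \<Rightarrow> nat graph" where
  "cycle_power n m = ({1..n}, \<lambda>i j. i \<in> {1..n} \<and> j \<in> {1..n} \<and> i \<noteq> j \<and> cycle_dist n i j \<le> m)"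

definition lex_product :: "'a graph \<Rightarrow> 'b graph \<Rightarrow> ('a \<times> 'b) graph" where
  "lex_product G H = (verts G \<times> verts H,
     \<lambda>(g1, h1) (g2, h2). (g1, h1) \<in> verts G \<times> verts H \<and> (g2, h2) \<in> verts G \<times> verts H \<and>
       (adj G g1 g2 \<or> (g1 = g2 \<and> adj H h1 h2)))"

end

theory Submission
  imports Defs
begin

text \<open>
  Walk through a legal sequence of \<open>C\<^sub>n\<^sup>m \<circ> H\<close> and look at the layers
  \<open>{g} \<times> V(H)\<close> of its vertices. A vertex on a new layer that is not yet dominated through the
  cycle power is \<open>fresh\<close>; a vertex on a new but already covered layer must footprint a
  neighbouring layer, and distinct such vertices footprint distinct layers; a vertex on a
  visited layer footprints its own layer, so the visits of a layer form a legal sequence of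
  \<open>H\<close>, one vertex shorter if the layer is also footprinted from outside. With \<open>f\<close> fresh layers
  and \<open>u\<close> footprints in non-fresh layers this gives length \<open>\<le> \<gamma>\<^sub>g\<^sub>r(H) f + u\<close>. Each fresh
  vertex adds \<open>m + 1\<close> windows of \<open>m + 1\<close> consecutive vertices to the union of the balls
  \<open>N[g]\<close> seen so far, and each of the \<open>u\<close> footprints at least one, so \<open>(m + 1) f + u \<le> n\<close>;
  the balls alone give \<open>2 m + 1 + u \<le> n\<close>.

  Put Grundy dominating sequences of \<open>H\<close> on \<open>p\<close> layers that are pairwise more
  than \<open>m\<close> apart, and single vertices on the \<open>n - p (m + 1)\<close> layers in between, with
  \<open>p = \<lfloor>n / (m + 1)\<rfloor>\<close> if \<open>\<gamma>\<^sub>g\<^sub>r(H) > m\<close> and \<open>p = 2\<close> otherwise.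
\<close>

section \<open>Legal sequences\<close>

definition legal_seq :: "'a graph \<Rightarrow> 'a list \<Rightarrow> bool" where
  "legal_seq G xs \<longleftrightarrow> distinct xs \<and> set xs \<subseteq> verts G \<and>
     (\<forall>i < length xs. closed_nbhd G (xs ! i) - (\<Union>j<i. closed_nbhd G (xs ! j)) \<noteq> {})"

abbreviation dominated :: "'a graph \<Rightarrow> 'a list \<Rightarrow> 'a set" where
  "dominated G xs \<equiv> \<Union>v\<in>set xs. closed_nbhd G v"

lemma grundy_dom_seq_iff_legal_seq:
  "grundy_dom_seq G xs \<longleftrightarrow> legal_seq G xs \<and> dominated G xs = verts G"
  unfolding grundy_dom_seq_def legal_seq_def by blast

lemma legal_seq_Nil [simp]: "legal_seq G []"
  by (simp add: legal_seq_def)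

lemma self_in_closed_nbhd: "v \<in> closed_nbhd G v"
  by (simp add: closed_nbhd_def)

lemma closed_nbhd_subset_verts: "v \<in> verts G \<Longrightarrow> closed_nbhd G v \<subseteq> verts G"
  by (auto simp: closed_nbhd_def)

lemma dominated_subset_verts: "set xs \<subseteq> verts G \<Longrightarrow> dominated G xs \<subseteq> verts G"
  by (auto simp: closed_nbhd_def)

lemma UN_nth_less_length: "(\<Union>j<length xs. f (xs ! j)) = (\<Union>v\<in>set xs. f v)"
  by (auto simp: in_set_conv_nth) (use nth_mem in blast)

lemma legal_seq_snoc:
  "legal_seq G (xs @ [v]) \<longleftrightarrow>
     legal_seq G xs \<and> v \<notin> set xs \<and> v \<in> verts G \<and> \<not> closed_nbhd G v \<subseteq> dominated G xs"
proof -
  have prefix: "(\<Union>j<i. closed_nbhd G ((xs @ [v]) ! j)) = (\<Union>j<i. closed_nbhd G (xs ! j))"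
    if "i \<le> length xs" for i
    using that by (auto simp: nth_append)
  have "(\<forall>i < length (xs @ [v]). closed_nbhd G ((xs @ [v]) ! i)
            - (\<Union>j<i. closed_nbhd G ((xs @ [v]) ! j)) \<noteq> {}) \<longleftrightarrow>
        (\<forall>i < length xs. closed_nbhd G (xs ! i) - (\<Union>j<i. closed_nbhd G (xs ! j)) \<noteq> {}) \<and>
        \<not> closed_nbhd G v \<subseteq> dominated G xs"
    by (simp add: All_less_Suc prefix UN_nth_less_length nth_append conj_commute cong: conj_cong)
  then show ?thesis
    unfolding legal_seq_def by auto
qed

lemma legal_seq_snoc_undominated:
  assumes "legal_seq G xs" "v \<in> verts G" "v \<notin> dominated G xs"
  shows "legal_seq G (xs @ [v])"
  using assms self_in_closed_nbhd[of v G] by (auto simp: legal_seq_snoc)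

lemma legal_seq_extends_to_grundy_dom_seq:
  assumes "finite (verts G)" "legal_seq G xs"
  shows "\<exists>ys. grundy_dom_seq G (xs @ ys)"
  using assms(2)
proof (induction "card (verts G - dominated G xs)" arbitrary: xs rule: less_induct)
  case less
  show ?case
  proof (cases "verts G \<subseteq> dominated G xs")
    case True
    with less.prems have "grundy_dom_seq G (xs @ [])"
      using dominated_subset_verts[of xs G]
      by (auto simp: grundy_dom_seq_iff_legal_seq legal_seq_def)
    then show ?thesis by blast
  next
    case False
    then obtain v where v: "v \<in> verts G" "v \<notin> dominated G xs" by blast
    have "card (verts G - dominated G (xs @ [v])) < card (verts G - dominated G xs)"
      using v assms(1) self_in_closed_nbhd[of v G] by (intro psubset_card_mono) auto
    with less.hyps legal_seq_snoc_undominated[OF less.prems v]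
    obtain ys where "grundy_dom_seq G ((xs @ [v]) @ ys)" by blast
    then show ?thesis by (intro exI[of _ "v # ys"]) simp
  qed
qed

lemma legal_seq_length_le_card: "finite (verts G) \<Longrightarrow> legal_seq G xs \<Longrightarrow> length xs \<le> card (verts G)"
  unfolding legal_seq_def by (metis card_mono distinct_card)

lemma finite_grundy_dom_seq_lengths:
  "finite (verts G) \<Longrightarrow> finite (length ` {xs. grundy_dom_seq G xs})"
  by (rule finite_subset[of _ "{..card (verts G)}"])
    (auto simp: grundy_dom_seq_iff_legal_seq legal_seq_length_le_card)

lemma grundy_dom_seq_length_le:
  "finite (verts G) \<Longrightarrow> grundy_dom_seq G xs \<Longrightarrow> length xs \<le> grundy_dom_number G"
  unfolding grundy_dom_number_def by (auto intro: Max_ge finite_grundy_dom_seq_lengths)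

lemma grundy_dom_number_attained:
  assumes "finite (verts G)"
  obtains xs where "grundy_dom_seq G xs" "length xs = grundy_dom_number G"
proof -
  obtain ys where "grundy_dom_seq G ([] @ ys)"
    using legal_seq_extends_to_grundy_dom_seq[OF assms legal_seq_Nil] by blast
  then have "length ` {xs. grundy_dom_seq G xs} \<noteq> {}" by blast
  then have "grundy_dom_number G \<in> length ` {xs. grundy_dom_seq G xs}"
    unfolding grundy_dom_number_def using Max_in finite_grundy_dom_seq_lengths[OF assms] by blast
  then obtain xs where "grundy_dom_seq G xs" "grundy_dom_number G = length xs" by auto
  with that show ?thesis by simp
qed

lemma legal_seq_length_le:
  assumes "finite (verts G)" "legal_seq G xs"
  shows "length xs \<le> grundy_dom_number G"
proof -
  obtain ys where "grundy_dom_seq G (xs @ ys)"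
    using legal_seq_extends_to_grundy_dom_seq[OF assms] by blast
  from grundy_dom_seq_length_le[OF assms(1) this] show ?thesis by simp
qed

lemma legal_seq_length_less:
  assumes "finite (verts G)" "legal_seq G xs" "v \<in> verts G" "v \<notin> dominated G xs"
  shows "length xs < grundy_dom_number G"
  using legal_seq_length_le[OF assms(1) legal_seq_snoc_undominated[OF assms(2-4)]] by simp

lemma grundy_dom_seq_nonempty: "verts G \<noteq> {} \<Longrightarrow> grundy_dom_seq G xs \<Longrightarrow> xs \<noteq> []"
  by (auto simp: grundy_dom_seq_iff_legal_seq)

lemma grundy_dom_number_pos:
  assumes "finite (verts G)" "verts G \<noteq> {}"
  shows "0 < grundy_dom_number G"
proof -
  obtain xs where xs: "grundy_dom_seq G xs" "length xs = grundy_dom_number G"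
    using grundy_dom_number_attained[OF assms(1)] .
  then have "xs \<noteq> []" using grundy_dom_seq_nonempty[OF assms(2)] by blast
  with xs(2) show ?thesis by (metis length_greater_0_conv)
qed

section \<open>Powers of cycles\<close>

definition cycle_fwd :: "nat \<Rightarrow> nat \<Rightarrow> nat \<Rightarrow> nat" where
  "cycle_fwd n a b = (b + n - a) mod n"

lemma cycle_fwd_eq:
  assumes "a \<in> {1..n}" "b \<in> {1..n}"
  shows "cycle_fwd n a b = (if a \<le> b then b - a else b + n - a)"
proof (cases "a \<le> b")
  case True
  then have "b + n - a = (b - a) + n" by simp
  then have "cycle_fwd n a b = (b - a) mod n" by (simp add: cycle_fwd_def)
  also have "\<dots> = b - a" using assms by (intro mod_less) auto
  finally show ?thesis using True by simp
qed (use assms in \<open>auto simp: cycle_fwd_def\<close>)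

lemma cycle_dist_eq_min_cycle_fwd: "cycle_dist n a b = min (cycle_fwd n b a) (cycle_fwd n a b)"
  by (simp add: cycle_dist_def cycle_fwd_def)

lemma cycle_dist_le_if_cycle_fwd_le:
  assumes "a \<in> {1..n}" "b \<in> {1..n}" "c \<in> {1..n}" "cycle_fwd n a b \<le> m" "cycle_fwd n a c \<le> m"
  shows "cycle_dist n b c \<le> m"
  using assms unfolding cycle_dist_eq_min_cycle_fwd min_def
  by (auto simp: cycle_fwd_eq split: if_splits)

lemma bij_betw_by_inj_on_card:
  assumes "inj_on f A" "f ` A \<subseteq> B" "finite B" "card A = card B"
  shows "bij_betw f A B"
  using assms card_subset_eq[of B "f ` A"] card_image[of f A] unfolding bij_betw_def by simp

lemma bij_betw_cycle_fwd_from: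
  assumes "g \<in> {1..n}"
  shows "bij_betw (cycle_fwd n g) {1..n} {..<n}"
proof (rule bij_betw_by_inj_on_card)
  show "inj_on (cycle_fwd n g) {1..n}"
    using assms by (intro inj_onI) (auto simp: cycle_fwd_eq split: if_splits)
qed (use assms in \<open>auto simp: cycle_fwd_def\<close>)

lemma bij_betw_cycle_fwd_to:
  assumes "g \<in> {1..n}"
  shows "bij_betw (\<lambda>x. cycle_fwd n x g) {1..n} {..<n}"
proof (rule bij_betw_by_inj_on_card)
  show "inj_on (\<lambda>x. cycle_fwd n x g) {1..n}"
    using assms by (intro inj_onI) (auto simp: cycle_fwd_eq split: if_splits)
qed (use assms in \<open>auto simp: cycle_fwd_def\<close>)

lemma card_bij_betw_Collect:
  assumes "bij_betw f A B"
  shows "card {x \<in> A. P (f x)} = card {y \<in> B. P y}"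
  using bij_betw_same_card[OF bij_betw_Collect[OF assms, of P "\<lambda>x. P (f x)"]] by simp

lemma card_cycle_fwd_to_le:
  assumes "m < n" "g \<in> {1..n}"
  shows "card {x \<in> {1..n}. cycle_fwd n x g \<le> m} = m + 1"
proof -
  have "card {x \<in> {1..n}. cycle_fwd n x g \<le> m} = card {d \<in> {..<n}. d \<le> m}"
    using assms by (intro card_bij_betw_Collect bij_betw_cycle_fwd_to)
  also have "{d \<in> {..<n}. d \<le> m} = {..m}" using assms by auto
  finally show ?thesis by simp
qed

lemma card_cycle_fwd_from_le:
  assumes "m < n" "g \<in> {1..n}"
  shows "card {x \<in> {1..n}. cycle_fwd n g x \<le> m} = m + 1"
proof -
  have "card {x \<in> {1..n}. cycle_fwd n g x \<le> m} = card {d \<in> {..<n}. d \<le> m}"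
    using assms by (intro card_bij_betw_Collect bij_betw_cycle_fwd_from)
  also have "{d \<in> {..<n}. d \<le> m} = {..m}" using assms by auto
  finally show ?thesis by simp
qed

definition cycle_ball :: "nat \<Rightarrow> nat \<Rightarrow> nat \<Rightarrow> nat set" where
  "cycle_ball n m g = {x \<in> {1..n}. cycle_dist n g x \<le> m}"

definition cycle_nbhd :: "nat \<Rightarrow> nat \<Rightarrow> nat \<Rightarrow> nat set" where
  "cycle_nbhd n m g = {x \<in> {1..n}. x \<noteq> g \<and> cycle_dist n g x \<le> m}"

definition cycle_window :: "nat \<Rightarrow> nat \<Rightarrow> nat \<Rightarrow> nat set" where
  "cycle_window n m x = {y \<in> {1..n}. cycle_fwd n x y \<le> m}"

definition windows_within :: "nat \<Rightarrow> nat \<Rightarrow> nat set \<Rightarrow> nat set" where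
  "windows_within n m S = {x \<in> {1..n}. cycle_window n m x \<subseteq> S}"

lemma cycle_ball_eq_insert_nbhd: "g \<in> {1..n} \<Longrightarrow> cycle_ball n m g = insert g (cycle_nbhd n m g)"
  unfolding cycle_ball_def cycle_nbhd_def cycle_dist_def by auto

lemma cycle_nbhd_subset_ball: "cycle_nbhd n m g \<subseteq> cycle_ball n m g"
  unfolding cycle_ball_def cycle_nbhd_def by auto

lemma cycle_ball_subset: "cycle_ball n m g \<subseteq> {1..n}"
  unfolding cycle_ball_def by auto

lemma card_cycle_ball:
  assumes "2 * m < n" "g \<in> {1..n}"
  shows "card (cycle_ball n m g) = 2 * m + 1"
proof -
  let ?A = "{x \<in> {1..n}. cycle_fwd n g x \<le> m}" and ?B = "{x \<in> {1..n}. cycle_fwd n x g \<le> m}"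
  have "cycle_ball n m g = ?A \<union> ?B"
    unfolding cycle_ball_def cycle_dist_eq_min_cycle_fwd by auto
  moreover have "?A \<inter> ?B = {g}"
    using assms by (auto simp: cycle_fwd_eq split: if_splits)
  moreover have "card ?A + card ?B = card (?A \<union> ?B) + card (?A \<inter> ?B)"
    by (rule card_Un_Int) auto
  ultimately show ?thesis
    using assms card_cycle_fwd_to_le[of m n g] card_cycle_fwd_from_le[of m n g] by simp
qed

lemma cycle_dist_less:
  assumes "b \<in> {1..n}" "x \<in> {1..n}" "b < x"
  shows "cycle_dist n b x = min (b + n - x) (x - b)"
  using assms by (simp add: cycle_dist_eq_min_cycle_fwd cycle_fwd_eq)

lemma mem_cycle_nbhd_if_ahead:
  "b \<in> {1..n} \<Longrightarrow> x \<in> {1..n} \<Longrightarrow> b < x \<Longrightarrow> x \<le> b + m \<Longrightarrow> x \<in> cycle_nbhd n m b"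
  by (simp add: cycle_nbhd_def cycle_dist_less)

lemma not_mem_cycle_nbhd_if_far:
  "b \<in> {1..n} \<Longrightarrow> x \<in> {1..n} \<Longrightarrow> b + (m + 1) \<le> x \<Longrightarrow> x + (m + 1) \<le> b + n \<Longrightarrow>
    x \<notin> cycle_nbhd n m b"
  by (simp add: cycle_nbhd_def cycle_dist_less)

lemma card_windows_within_le: "card (windows_within n m S) \<le> n"
proof -
  have "windows_within n m S \<subseteq> {1..n}" by (auto simp: windows_within_def)
  from card_mono[OF _ this] show ?thesis by simp
qed

lemma card_windows_within_mono: "S \<subseteq> S' \<Longrightarrow> card (windows_within n m S) \<le> card (windows_within n m S')"
  by (rule card_mono) (auto simp: windows_within_def)

text \<open>The \<open>m + 1\<close> windows ending at \<open>g\<close> contain \<open>g \<notin> S\<close> and lie in the ball around \<open>g\<close>.\<close>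
lemma card_windows_within_add_ball:
  assumes "m < n" "g \<in> {1..n}" "g \<notin> S"
  shows "card (windows_within n m S) + (m + 1) \<le> card (windows_within n m (S \<union> cycle_ball n m g))"
proof -
  let ?E = "{x \<in> {1..n}. cycle_fwd n x g \<le> m}"
  have "?E \<inter> windows_within n m S = {}"
    using assms by (auto simp: windows_within_def cycle_window_def)
  then have "card (?E \<union> windows_within n m S) = (m + 1) + card (windows_within n m S)"
    using card_cycle_fwd_to_le[OF assms(1,2)]
    by (subst card_Un_disjoint) (auto simp: windows_within_def)
  moreover have "?E \<union> windows_within n m S \<subseteq> windows_within n m (S \<union> cycle_ball n m g)"
    using assms cycle_dist_le_if_cycle_fwd_le[of _ n g _ m]
    by (auto simp: windows_within_def cycle_window_def cycle_ball_def)
  then have "card (?E \<union> windows_within n m S) \<le> card (windows_within n m (S \<union> cycle_ball n m g))"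
    by (rule card_mono[rotated]) (auto simp: windows_within_def)
  ultimately show ?thesis by simp
qed

text \<open>A point \<open>w \<notin> S\<close> of the ball around \<open>y\<close> lies in a window inside that ball:
  the one starting at \<open>y\<close> or the one starting at \<open>w\<close>.\<close>
lemma card_windows_within_add_ball_point:
  assumes "y \<in> {1..n}" "w \<in> cycle_ball n m y" "w \<notin> S"
  shows "card (windows_within n m S) + 1 \<le> card (windows_within n m (S \<union> cycle_ball n m y))"
proof -
  obtain x where x: "x \<in> {1..n}" "w \<in> cycle_window n m x" "cycle_window n m x \<subseteq> cycle_ball n m y"
  proof (cases "cycle_fwd n y w \<le> m")
    case True
    have "cycle_window n m y \<subseteq> cycle_ball n m y"
      by (auto simp: cycle_window_def cycle_ball_def cycle_dist_eq_min_cycle_fwd)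
    with True assms show ?thesis by (intro that[of y]) (auto simp: cycle_window_def cycle_ball_def)
  next
    case False
    with assms have "w \<in> {1..n}" "cycle_fwd n w y \<le> m"
      by (auto simp: cycle_ball_def cycle_dist_eq_min_cycle_fwd)
    then show ?thesis
      using assms cycle_dist_le_if_cycle_fwd_le[of w n y _ m]
      by (intro that[of w]) (auto simp: cycle_window_def cycle_ball_def cycle_fwd_def)
  qed
  then have "insert x (windows_within n m S) \<subseteq> windows_within n m (S \<union> cycle_ball n m y)"
    by (auto simp: windows_within_def)
  moreover have "x \<notin> windows_within n m S"
    using x assms by (auto simp: windows_within_def)
  ultimately show ?thesis
    using card_mono[of "windows_within n m (S \<union> cycle_ball n m y)"
        "insert x (windows_within n m S)"]
    by (simp add: windows_within_def)
qed

lemma verts_lex_product: "verts (lex_product G H) = verts G \<times> verts H"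
  by (simp add: lex_product_def verts_def)

lemma adj_lex_product: "adj (lex_product G H) (a, b) (c, d) \<longleftrightarrow>
    (a, b) \<in> verts G \<times> verts H \<and> (c, d) \<in> verts G \<times> verts H \<and> (adj G a c \<or> a = c \<and> adj H b d)"
  by (simp add: lex_product_def adj_def verts_def)

lemma verts_cycle_power: "verts (cycle_power n m) = {1..n}"
  by (simp add: cycle_power_def verts_def)

lemma adj_cycle_power:
  "adj (cycle_power n m) i j \<longleftrightarrow> i \<in> {1..n} \<and> j \<in> {1..n} \<and> i \<noteq> j \<and> cycle_dist n i j \<le> m"
  by (simp add: cycle_power_def adj_def)

lemma verts_lex_cycle_power: "verts (lex_product (cycle_power n m) H) = {1..n} \<times> verts H"
  by (simp add: verts_lex_product verts_cycle_power)

lemma closed_nbhd_lex_cycle_power: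
  assumes "g \<in> {1..n}" "h \<in> verts H"
  shows "closed_nbhd (lex_product (cycle_power n m) H) (g, h) =
    cycle_nbhd n m g \<times> verts H \<union> {g} \<times> closed_nbhd H h"
proof (rule set_eqI)
  fix p :: "nat \<times> 'a"
  show "p \<in> closed_nbhd (lex_product (cycle_power n m) H) (g, h) \<longleftrightarrow>
      p \<in> cycle_nbhd n m g \<times> verts H \<union> {g} \<times> closed_nbhd H h"
    using assms closed_nbhd_subset_verts[OF assms(2)]
    by (cases p) (auto simp: closed_nbhd_def adj_lex_product verts_lex_product
        verts_cycle_power adj_cycle_power cycle_nbhd_def)
qed

section \<open>The upper bound\<close>

lemma card_Collect_less_Suc:
  "card {s. s < Suc t \<and> P s} = card {s. s < t \<and> P s} + (if P t then 1 else 0)"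
proof -
  have "{s. s < Suc t \<and> P s} = {s. s < t \<and> P s} \<union> (if P t then {t} else {})"
    by (auto simp: less_Suc_eq)
  then show ?thesis by (simp add: card_Un_disjoint)
qed

locale lex_cycle_legal_seq =
  fixes n m :: nat and H :: "'b graph" and xs :: "(nat \<times> 'b) list"
  assumes ball_proper: "2 * m < n"
    and finite_H: "finite (verts H)"
    and legal: "legal_seq (lex_product (cycle_power n m) H) xs"
begin

abbreviation "GH \<equiv> lex_product (cycle_power n m) H"

definition layer :: "nat \<Rightarrow> nat" where "layer t = fst (xs ! t)"
definition hcoord :: "nat \<Rightarrow> 'b" where "hcoord t = snd (xs ! t)"

definition dominated_before :: "nat \<Rightarrow> (nat \<times> 'b) set" where
  "dominated_before t = (\<Union>j<t. closed_nbhd GH (xs ! j))"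

text \<open>Layers \<open>{g} \<times> V(H)\<close> dominated entirely through edges of the cycle power.\<close>
definition covered :: "nat \<Rightarrow> nat set" where
  "covered t = (\<Union>j<t. cycle_nbhd n m (layer j))"

definition visited :: "nat \<Rightarrow> nat set" where
  "visited t = layer ` {..<t}"

definition fresh :: "nat \<Rightarrow> bool" where
  "fresh t \<longleftrightarrow> t < length xs \<and> layer t \<notin> visited t \<and> layer t \<notin> covered t"

definition spilling :: "nat \<Rightarrow> bool" where
  "spilling t \<longleftrightarrow> t < length xs \<and> layer t \<notin> visited t \<and> layer t \<in> covered t"

definition fresh_layers :: "nat set" where
  "fresh_layers = layer ` {t. fresh t}"

definition spill_layer :: "nat \<Rightarrow> nat" where
  "spill_layer t =
    (SOME w. w \<in> cycle_nbhd n m (layer t) \<and> (\<exists>h\<in>verts H. (w, h) \<notin> dominated_before t))"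

lemma layer_hcoord_mem:
  assumes "t < length xs"
  shows "layer t \<in> {1..n} \<and> hcoord t \<in> verts H"
proof -
  have "xs ! t \<in> {1..n} \<times> verts H"
    using legal nth_mem[OF assms] by (auto simp: legal_seq_def verts_lex_cycle_power)
  then show ?thesis unfolding layer_def hcoord_def by (simp only: mem_Times_iff)
qed

lemma nth_eq: "xs ! t = (layer t, hcoord t)"
  by (simp add: layer_def hcoord_def)

lemma closed_nbhd_nth:
  assumes "t < length xs"
  shows "closed_nbhd GH (xs ! t) =
    cycle_nbhd n m (layer t) \<times> verts H \<union> {layer t} \<times> closed_nbhd H (hcoord t)"
  unfolding nth_eq using layer_hcoord_mem[OF assms] by (intro closed_nbhd_lex_cycle_power) auto

lemma footprint_nonempty: "t < length xs \<Longrightarrow> closed_nbhd GH (xs ! t) - dominated_before t \<noteq> {}"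
  using legal by (simp add: legal_seq_def dominated_before_def)

lemma covered_dominated:
  "x \<in> covered t \<Longrightarrow> t \<le> length xs \<Longrightarrow> h \<in> verts H \<Longrightarrow> (x, h) \<in> dominated_before t"
  unfolding covered_def dominated_before_def using closed_nbhd_nth by fastforce

lemma own_layer_dominated:
  "s < t \<Longrightarrow> t \<le> length xs \<Longrightarrow> h \<in> closed_nbhd H (hcoord s) \<Longrightarrow> (layer s, h) \<in> dominated_before t"
  unfolding dominated_before_def using closed_nbhd_nth by fastforce

lemma cycle_nbhd_subset_covered: "s < t \<Longrightarrow> cycle_nbhd n m (layer s) \<subseteq> covered t"
  unfolding covered_def by blast

lemma covered_mono: "s \<le> t \<Longrightarrow> covered s \<subseteq> covered t"
  unfolding covered_def by (intro UN_mono) auto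

lemma first_visit: "g \<in> visited t \<Longrightarrow> \<exists>s<t. layer s = g \<and> g \<notin> visited s"
proof -
  assume "g \<in> visited t"
  then obtain s0 where s0: "s0 < t" "layer s0 = g" unfolding visited_def by auto
  define s where "s = (LEAST s. layer s = g)"
  have "layer s = g" "s \<le> s0"
    unfolding s_def using s0(2) by (auto intro: LeastI Least_le)
  moreover have "g \<notin> visited s"
    unfolding visited_def s_def using not_less_Least by fastforce
  ultimately show ?thesis using s0(1) by (intro exI[of _ s]) auto
qed

lemma first_visits_eq: "layer s \<notin> visited s \<Longrightarrow> layer t \<notin> visited t \<Longrightarrow> layer s = layer t \<Longrightarrow> s = t"
  unfolding visited_def by (metis image_eqI lessThan_iff linorder_neqE_nat)

lemma revisit_footprint:
  assumes "t < length xs" "layer t \<in> visited t" "p \<in> closed_nbhd GH (xs ! t) - dominated_before t"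
  shows "fst p = layer t \<and> snd p \<in> closed_nbhd H (hcoord t)"
proof -
  obtain s where "s < t" "layer s = layer t" using assms(2) unfolding visited_def by auto
  then have covered: "cycle_nbhd n m (layer t) \<subseteq> covered t"
    using cycle_nbhd_subset_covered by metis
  have "p \<notin> cycle_nbhd n m (layer t) \<times> verts H"
  proof
    assume "p \<in> cycle_nbhd n m (layer t) \<times> verts H"
    then have "p \<in> dominated_before t"
      using covered covered_dominated[of "fst p" t "snd p"] assms(1) by (cases p) auto
    with assms(3) show False by blast
  qed
  then show ?thesis using assms(3) closed_nbhd_nth[OF assms(1)] by (cases p) auto
qed

lemma own_layer_in_verts: "t < length xs \<Longrightarrow> closed_nbhd H (hcoord t) \<subseteq> verts H"
  using closed_nbhd_subset_verts[of "hcoord t" H] layer_hcoord_mem[of t] by simp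

lemma revisit_not_covered:
  assumes "t < length xs" "layer t \<in> visited t"
  shows "layer t \<notin> covered t"
proof
  assume covered: "layer t \<in> covered t"
  obtain p where p: "p \<in> closed_nbhd GH (xs ! t) - dominated_before t"
    using footprint_nonempty[OF assms(1)] by blast
  then have "fst p = layer t" "snd p \<in> verts H"
    using revisit_footprint[OF assms p] own_layer_in_verts[OF assms(1)] by auto
  then have "p \<in> dominated_before t"
    using covered_dominated[OF covered, of "snd p"] assms(1) by (cases p) auto
  with p show False by blast
qed

lemma not_spilling_not_covered: "t < length xs \<Longrightarrow> \<not> spilling t \<Longrightarrow> layer t \<notin> covered t"
  using revisit_not_covered unfolding spilling_def by blast

lemma spill_layer_exists:
  assumes "spilling t"
  shows "\<exists>w. w \<in> cycle_nbhd n m (layer t) \<and> (\<exists>h\<in>verts H. (w, h) \<notin> dominated_before t)"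
proof -
  have t: "t < length xs" "layer t \<in> covered t" using assms unfolding spilling_def by auto
  obtain p where p: "p \<in> closed_nbhd GH (xs ! t) - dominated_before t"
    using footprint_nonempty[OF t(1)] by blast
  have "p \<notin> {layer t} \<times> closed_nbhd H (hcoord t)"
  proof
    assume "p \<in> {layer t} \<times> closed_nbhd H (hcoord t)"
    then have "p \<in> dominated_before t"
      using covered_dominated[OF t(2), of "snd p"] own_layer_in_verts[OF t(1)] t(1)
      by (cases p) auto
    with p show False by blast
  qed
  then show ?thesis using p closed_nbhd_nth[OF t(1)] by auto
qed

lemma spill_layer:
  "spilling t \<Longrightarrow>
    spill_layer t \<in> cycle_nbhd n m (layer t) \<and> (\<exists>h\<in>verts H. (spill_layer t, h) \<notin> dominated_before t)"
  unfolding spill_layer_def by (rule someI_ex[OF spill_layer_exists])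

lemma spill_layer_not_covered: "spilling t \<Longrightarrow> spill_layer t \<notin> covered t"
  using spill_layer covered_dominated unfolding spilling_def by fastforce

lemma spill_layer_covered_later: "s < t \<Longrightarrow> spilling s \<Longrightarrow> spill_layer s \<in> covered t"
  using spill_layer cycle_nbhd_subset_covered by blast

lemma inj_on_spill_layer: "inj_on spill_layer {t. spilling t}"
proof (rule inj_onI, rule ccontr)
  fix s t assume s: "s \<in> {t. spilling t}" and t: "t \<in> {t. spilling t}"
    and eq: "spill_layer s = spill_layer t" and "s \<noteq> t"
  then consider "s < t" | "t < s" by linarith
  then show False
  proof cases
    case 1
    with s eq have "spill_layer t \<in> covered t" using spill_layer_covered_later by force
    with t show False using spill_layer_not_covered by blast
  next
    case 2
    with t eq have "spill_layer s \<in> covered s" using spill_layer_covered_later by force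
    with s show False using spill_layer_not_covered by blast
  qed
qed

lemma layer_in_fresh_layers_iff:
  assumes "t < length xs"
  shows "layer t \<in> fresh_layers \<longleftrightarrow> \<not> spilling t"
proof
  assume "layer t \<in> fresh_layers"
  then obtain s where "fresh s" "layer s = layer t" unfolding fresh_layers_def by auto
  then show "\<not> spilling t"
    using first_visits_eq[of s t] unfolding fresh_def spilling_def by auto
next
  assume not_spilling: "\<not> spilling t"
  obtain s where s: "s \<le> t" "layer s = layer t" "layer t \<notin> visited s"
    using first_visit[of "layer t" t] by (cases "layer t \<in> visited t") (auto intro: less_imp_le)
  have "layer t \<notin> covered s"
    using not_spilling_not_covered[OF assms not_spilling] covered_mono[OF s(1)] by blast
  with s assms have "fresh s" unfolding fresh_def by auto
  then have "layer s \<in> fresh_layers"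
    unfolding fresh_layers_def using imageI[of s "{t. fresh t}" layer] by simp
  with s(2) show "layer t \<in> fresh_layers" by simp
qed

lemma visited_spill_layer_fresh:
  assumes "spilling t" "spill_layer t \<in> visited t"
  shows "spill_layer t \<in> fresh_layers"
proof -
  obtain s where s: "s < t" "layer s = spill_layer t" "spill_layer t \<notin> visited s"
    using first_visit[OF assms(2)] by blast
  have "spill_layer t \<notin> covered s"
    using spill_layer_not_covered[OF assms(1)] covered_mono[of s t] s(1) by auto
  with s assms(1) have "fresh s" unfolding fresh_def spilling_def by auto
  then have "layer s \<in> fresh_layers"
    unfolding fresh_layers_def using imageI[of s "{t. fresh t}" layer] by simp
  with s(2) show ?thesis by simp
qed

definition layer_trace :: "nat \<Rightarrow> nat \<Rightarrow> 'b list" where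
  "layer_trace g t = map snd (filter (\<lambda>v. fst v = g) (take t xs))"

lemma set_layer_trace:
  "t \<le> length xs \<Longrightarrow> set (layer_trace g t) = hcoord ` {s. s < t \<and> layer s = g}"
  unfolding layer_trace_def
  by (force simp: in_set_conv_nth layer_def hcoord_def image_iff)

lemma length_layer_trace:
  assumes "t \<le> length xs"
  shows "length (layer_trace g t) = card {s. s < t \<and> layer s = g}"
proof -
  have "length (layer_trace g t) = card {i. i < length (take t xs) \<and> fst (take t xs ! i) = g}"
    unfolding layer_trace_def by (simp add: length_filter_conv_card)
  also have "{i. i < length (take t xs) \<and> fst (take t xs ! i) = g} = {s. s < t \<and> layer s = g}"
    using assms by (auto simp: layer_def)
  finally show ?thesis .
qed

lemma layer_trace_Suc:
  "t < length xs \<Longrightarrow>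
    layer_trace g (Suc t) = (if layer t = g then layer_trace g t @ [hcoord t] else layer_trace g t)"
  unfolding layer_trace_def by (simp add: take_Suc_conv_app_nth layer_def hcoord_def)

lemma dominated_layer_trace:
  assumes "t \<le> length xs" "h \<in> dominated H (layer_trace g t)"
  shows "(g, h) \<in> dominated_before t"
  using assms own_layer_dominated by (auto simp: set_layer_trace)

lemma hcoord_not_in_layer_trace: "t < length xs \<Longrightarrow> hcoord t \<notin> set (layer_trace (layer t) t)"
proof
  assume t: "t < length xs" and "hcoord t \<in> set (layer_trace (layer t) t)"
  then obtain s where s: "s < t" "layer s = layer t" "hcoord s = hcoord t"
    by (auto simp: set_layer_trace)
  then have "xs ! s = xs ! t" by (simp add: nth_eq)
  with s(1) t legal show False by (simp add: legal_seq_def nth_eq_iff_index_eq)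
qed

lemma layer_trace_first_visit:
  assumes "t \<le> length xs" "layer t \<notin> visited t"
  shows "layer_trace (layer t) t = []"
proof -
  have "layer s \<noteq> layer t" if "s < t" for s
  proof
    assume "layer s = layer t"
    then have "layer t \<in> visited t"
      unfolding visited_def using that by (intro image_eqI[of _ _ s]) auto
    with assms(2) show False by contradiction
  qed
  then have "set (layer_trace (layer t) t) = {}"
    using assms(1) by (auto simp: set_layer_trace)
  then show ?thesis by simp
qed

lemma footprint_outside_layer_trace:
  assumes t: "t < length xs" and visited: "layer t \<in> visited t"
  shows "\<not> closed_nbhd H (hcoord t) \<subseteq> dominated H (layer_trace (layer t) t)"
proof -
  obtain p where p: "p \<in> closed_nbhd GH (xs ! t) - dominated_before t"
    using footprint_nonempty[OF t] by blast
  then show ?thesis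
    using revisit_footprint[OF t visited p] dominated_layer_trace[of t "snd p" "layer t"] t
    by (cases p) auto
qed

lemma legal_layer_trace: "t \<le> length xs \<Longrightarrow> legal_seq H (layer_trace g t)"
proof (induction t)
  case (Suc t)
  then have t: "t < length xs" by simp
  have "\<not> closed_nbhd H (hcoord t) \<subseteq> dominated H (layer_trace (layer t) t)"
    using layer_trace_first_visit[of t] footprint_outside_layer_trace[OF t] t
      self_in_closed_nbhd[of "hcoord t" H]
    by (cases "layer t \<in> visited t") auto
  then show ?case
    using Suc layer_hcoord_mem[OF t] hcoord_not_in_layer_trace[OF t]
    by (auto simp: layer_trace_Suc[OF t] legal_seq_snoc)
qed (simp add: layer_trace_def)

definition layer_count :: "nat \<Rightarrow> nat" where
  "layer_count g = card {s. s < length xs \<and> layer s = g}"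

lemma layer_count_le: "layer_count g \<le> grundy_dom_number H"
  using legal_seq_length_le[OF finite_H legal_layer_trace[of "length xs" g]]
  by (simp add: length_layer_trace layer_count_def)

text \<open>All visits of a fresh layer \<open>g = spill_layer t\<close> precede \<open>t\<close> (afterwards \<open>g\<close> is
  covered), and the undominated vertex of \<open>{g} \<times> V(H)\<close> extends their trace.\<close>
lemma layer_count_less:
  assumes g: "g \<in> fresh_layers" and t: "spilling t" "spill_layer t = g"
  shows "layer_count g < grundy_dom_number H"
proof -
  have t_less: "t < length xs" using t(1) unfolding spilling_def by simp
  have "s < t" if s: "s < length xs" "layer s = g" for s
  proof (rule ccontr)
    assume "\<not> s < t"
    moreover have "s \<noteq> t"
      using t s spill_layer[OF t(1)] by (auto simp: cycle_nbhd_def)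
    ultimately have "g \<in> covered s"
      using spill_layer_covered_later[OF _ t(1)] t(2) by simp
    moreover have "\<not> spilling s"
      using layer_in_fresh_layers_iff[OF s(1)] s(2) g by simp
    ultimately show False
      using not_spilling_not_covered[OF s(1)] s(2) by simp
  qed
  then have "{s. s < length xs \<and> layer s = g} = {s. s < t \<and> layer s = g}"
    using t_less by auto
  then have "length (layer_trace g t) = layer_count g"
    using t_less by (simp add: length_layer_trace layer_count_def)
  moreover obtain h where h: "h \<in> verts H" "(g, h) \<notin> dominated_before t"
    using spill_layer[OF t(1)] t(2) by blast
  have "h \<notin> dominated H (layer_trace g t)"
    using dominated_layer_trace[of t h g] t_less h(2) by auto
  then have "length (layer_trace g t) < grundy_dom_number H"
    using legal_seq_length_less[OF finite_H legal_layer_trace h(1)] t_less by simp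
  ultimately show ?thesis by simp
qed

definition outer_spills :: "nat set" where
  "outer_spills = {t. spilling t \<and> spill_layer t \<notin> fresh_layers}"

lemma finite_spilling: "finite {t. spilling t}"
  by (rule finite_subset[of _ "{..<length xs}"]) (auto simp: spilling_def)

lemma finite_fresh_layers: "finite fresh_layers"
  unfolding fresh_layers_def fresh_def by simp

lemma length_eq_layer_counts_spilling:
  "length xs = (\<Sum>g\<in>fresh_layers. layer_count g) + card {t. spilling t}"
proof -
  let ?A = "\<Union>g\<in>fresh_layers. {s. s < length xs \<and> layer s = g}"
  have "{..<length xs} = ?A \<union> {t. spilling t}"
    using layer_in_fresh_layers_iff by (auto simp: spilling_def)
  moreover have "?A \<inter> {t. spilling t} = {}"
    using layer_in_fresh_layers_iff by auto
  moreover have "finite ?A" using finite_fresh_layers by auto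
  ultimately have "length xs = card ?A + card {t. spilling t}"
    using finite_spilling card_Un_disjoint by (metis card_lessThan)
  moreover have "card ?A = (\<Sum>g\<in>fresh_layers. layer_count g)"
    unfolding layer_count_def by (rule card_UN_disjoint[OF finite_fresh_layers]) auto
  ultimately show ?thesis by simp
qed

lemma card_spilling:
  "card {t. spilling t} = card (fresh_layers \<inter> spill_layer ` {t. spilling t}) + card outer_spills"
proof -
  let ?M = "spill_layer ` {t. spilling t}"
  have "card {t. spilling t} = card ?M"
    using card_image[OF inj_on_spill_layer] by simp
  also have "\<dots> = card (fresh_layers \<inter> ?M) + card (?M - fresh_layers)"
    using finite_spilling card_Int_Diff[of ?M fresh_layers] by (simp add: Int_commute)
  also have "?M - fresh_layers = spill_layer ` outer_spills"
    unfolding outer_spills_def by auto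
  also have "card \<dots> = card outer_spills"
    by (rule card_image, rule inj_on_subset[OF inj_on_spill_layer]) (auto simp: outer_spills_def)
  finally show ?thesis .
qed

lemma sum_layer_count_le:
  "(\<Sum>g\<in>fresh_layers. layer_count g) + card (fresh_layers \<inter> spill_layer ` {t. spilling t})
    \<le> grundy_dom_number H * card fresh_layers"
proof -
  let ?M = "spill_layer ` {t. spilling t}"
  have "(\<Sum>g\<in>fresh_layers. layer_count g + (if g \<in> ?M then 1 else 0)) \<le>
      (\<Sum>g\<in>fresh_layers. grundy_dom_number H)"
    using layer_count_le layer_count_less by (intro sum_mono) (fastforce simp: Suc_le_eq)
  moreover have "(\<Sum>g\<in>fresh_layers. (if g \<in> ?M then 1 else 0)::nat) = card (fresh_layers \<inter> ?M)"
    using finite_fresh_layers by (simp add: sum.If_cases Int_def)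
  ultimately show ?thesis by (simp add: sum.distrib mult.commute)
qed

lemma length_le_fresh_layers_outer_spills:
  "length xs \<le> grundy_dom_number H * card fresh_layers + card outer_spills"
  using length_eq_layer_counts_spilling card_spilling sum_layer_count_le by linarith

definition ball_union :: "nat \<Rightarrow> nat set" where
  "ball_union t = (\<Union>j<t. cycle_ball n m (layer j))"

lemma ball_union_Suc: "ball_union (Suc t) = ball_union t \<union> cycle_ball n m (layer t)"
  unfolding ball_union_def by (auto simp: lessThan_Suc)

lemma ball_union_subset: "ball_union t \<subseteq> {1..n}"
  unfolding ball_union_def using cycle_ball_subset by blast

lemma ball_union_eq:
  assumes "t \<le> length xs"
  shows "ball_union t = covered t \<union> visited t"
proof -
  have "cycle_ball n m (layer j) = insert (layer j) (cycle_nbhd n m (layer j))" if "j < t" for j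
    using that assms layer_hcoord_mem[of j] by (intro cycle_ball_eq_insert_nbhd) auto
  then show ?thesis unfolding ball_union_def covered_def visited_def by auto
qed

lemma fresh_layer_not_in_ball_union: "fresh t \<Longrightarrow> layer t \<notin> ball_union t"
  using ball_union_eq[of t] by (simp add: fresh_def)

lemma outer_spill_not_in_ball_union:
  assumes "t \<in> outer_spills"
  shows "spill_layer t \<notin> ball_union t"
proof -
  have t: "spilling t" "spill_layer t \<notin> fresh_layers" "t \<le> length xs"
    using assms by (auto simp: outer_spills_def spilling_def)
  then have "spill_layer t \<notin> visited t"
    using visited_spill_layer_fresh by blast
  with t show ?thesis
    using spill_layer_not_covered[OF t(1)] by (simp add: ball_union_eq)
qed

lemma outer_spill_in_ball: "t \<in> outer_spills \<Longrightarrow> spill_layer t \<in> cycle_ball n m (layer t)"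
  using spill_layer[of t] cycle_nbhd_subset_ball[of n m "layer t"] by (auto simp: outer_spills_def)

lemma windows_potential:
  "t \<le> length xs \<Longrightarrow>
    (m + 1) * card {s. s < t \<and> fresh s} + card {s. s < t \<and> s \<in> outer_spills}
      \<le> card (windows_within n m (ball_union t))"
proof (induction t)
  case (Suc t)
  then have t: "t < length xs" by simp
  have IH: "(m + 1) * card {s. s < t \<and> fresh s} + card {s. s < t \<and> s \<in> outer_spills}
      \<le> card (windows_within n m (ball_union t))"
    using Suc by simp
  have layer_t: "layer t \<in> {1..n}" using layer_hcoord_mem[OF t] by simp
  have m_less: "m < n" using ball_proper by simp
  consider "fresh t" | "t \<in> outer_spills" | "\<not> fresh t" "t \<notin> outer_spills"
    by blast
  then show ?case
  proof cases
    case 1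
    then have "t \<notin> outer_spills" by (simp add: outer_spills_def fresh_def spilling_def)
    moreover have "card (windows_within n m (ball_union t)) + (m + 1)
        \<le> card (windows_within n m (ball_union (Suc t)))"
      unfolding ball_union_Suc
      by (rule card_windows_within_add_ball[OF m_less layer_t fresh_layer_not_in_ball_union[OF 1]])
    ultimately show ?thesis using 1 IH by (simp add: card_Collect_less_Suc)
  next
    case 2
    then have "\<not> fresh t" by (simp add: outer_spills_def fresh_def spilling_def)
    moreover have "card (windows_within n m (ball_union t)) + 1
        \<le> card (windows_within n m (ball_union (Suc t)))"
      unfolding ball_union_Suc
      by (rule card_windows_within_add_ball_point[OF layer_t outer_spill_in_ball[OF 2]
            outer_spill_not_in_ball_union[OF 2]])
    ultimately show ?thesis using 2 IH by (simp add: card_Collect_less_Suc)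
  next
    case 3
    have "card (windows_within n m (ball_union t)) \<le> card (windows_within n m (ball_union (Suc t)))"
      unfolding ball_union_Suc by (rule card_windows_within_mono) blast
    with 3 IH show ?thesis by (simp add: card_Collect_less_Suc)
  qed
qed simp

lemma ball_potential:
  "1 \<le> t \<Longrightarrow> t \<le> length xs \<Longrightarrow> 2 * m + 1 + card {s. s < t \<and> s \<in> outer_spills} \<le> card (ball_union t)"
proof (induction t rule: dec_induct)
  case base
  have "0 < length xs" using base by linarith
  then have "layer 0 \<in> {1..n}" using layer_hcoord_mem[of 0] by simp
  then have "card (cycle_ball n m (layer 0)) = 2 * m + 1"
    using ball_proper by (intro card_cycle_ball) auto
  moreover have "0 \<notin> outer_spills"
    by (simp add: outer_spills_def spilling_def covered_def)
  then have "{s. s < 1 \<and> s \<in> outer_spills} = {}" by auto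
  moreover have "ball_union 1 = cycle_ball n m (layer 0)"
    by (simp add: ball_union_def lessThan_Suc)
  ultimately show ?case by simp
next
  case (step t)
  have finite: "finite (ball_union (Suc t))"
    using ball_union_subset finite_subset by blast
  show ?case
  proof (cases "t \<in> outer_spills")
    case True
    have "insert (spill_layer t) (ball_union t) \<subseteq> ball_union (Suc t)"
      using outer_spill_in_ball[OF True] by (auto simp: ball_union_Suc)
    from card_mono[OF finite this] step True outer_spill_not_in_ball_union[OF True]
    show ?thesis
      using finite_subset[OF ball_union_subset] by (simp add: card_Collect_less_Suc)
  next
    case False
    with step card_mono[OF finite, of "ball_union t"] show ?thesis
      by (simp add: card_Collect_less_Suc ball_union_Suc)
  qed
qed

lemma card_fresh_layers: "card fresh_layers = card {s. s < length xs \<and> fresh s}"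
proof -
  have "inj_on layer {t. fresh t}"
    using first_visits_eq by (intro inj_onI) (auto simp: fresh_def)
  moreover have "{t. fresh t} = {s. s < length xs \<and> fresh s}"
    by (auto simp: fresh_def)
  ultimately show ?thesis
    unfolding fresh_layers_def by (simp add: card_image)
qed

lemma outer_spills_eq: "outer_spills = {s. s < length xs \<and> s \<in> outer_spills}"
  by (auto simp: outer_spills_def spilling_def)

lemma fresh_layers_outer_spills_le: "(m + 1) * card fresh_layers + card outer_spills \<le> n"
proof -
  have "(m + 1) * card fresh_layers + card outer_spills
      \<le> card (windows_within n m (ball_union (length xs)))"
    using windows_potential[of "length xs"] by (simp add: card_fresh_layers flip: outer_spills_eq)
  then show ?thesis using card_windows_within_le order_trans by blast
qed

lemma outer_spills_le: "2 * m + 1 + card outer_spills \<le> n"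
proof (cases "xs = []")
  case True
  have "outer_spills = {}"
    unfolding outer_spills_def spilling_def using True by simp
  then show ?thesis using ball_proper by simp
next
  case False
  then have "1 \<le> length xs" by (cases xs) auto
  then have "2 * m + 1 + card outer_spills \<le> card (ball_union (length xs))"
    using ball_potential[of "length xs"] by (simp flip: outer_spills_eq)
  also have "\<dots> \<le> n"
    using card_mono[OF _ ball_union_subset, of "length xs"] by simp
  finally show ?thesis .
qed

end

section \<open>The construction\<close>

lemma not_dominated_lex_cycle_power:
  assumes "set ys \<subseteq> {1..n} \<times> verts H"
    and "\<And>u. u \<in> set ys \<Longrightarrow> fst u \<noteq> w \<and> w \<notin> cycle_nbhd n m (fst u)"
  shows "(w, h) \<notin> dominated (lex_product (cycle_power n m) H) ys"
proof
  assume "(w, h) \<in> dominated (lex_product (cycle_power n m) H) ys"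
  then obtain a b where ab: "(a, b) \<in> set ys"
    "(w, h) \<in> closed_nbhd (lex_product (cycle_power n m) H) (a, b)" by auto
  moreover have "a \<in> {1..n}" "b \<in> verts H" using ab(1) assms(1) by auto
  ultimately show False using assms(2)[OF ab(1)] by (simp add: closed_nbhd_lex_cycle_power)
qed

lemma legal_seq_append_layer_copy:
  assumes ys: "legal_seq (lex_product (cycle_power n m) H) ys" and hs: "legal_seq H hs"
    and g: "g \<in> {1..n}" and far: "\<And>u. u \<in> set ys \<Longrightarrow> fst u \<noteq> g \<and> g \<notin> cycle_nbhd n m (fst u)"
  shows "legal_seq (lex_product (cycle_power n m) H) (ys @ map (Pair g) hs)"
  using hs
proof (induction hs rule: rev_induct)
  case (snoc h hs)
  have hs: "legal_seq H hs" "h \<notin> set hs" "h \<in> verts H"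
    and new: "\<not> closed_nbhd H h \<subseteq> dominated H hs"
    using snoc.prems by (simp_all add: legal_seq_snoc)
  obtain z where z: "z \<in> closed_nbhd H h" "z \<notin> dominated H hs"
    using new by blast
  have ys_verts: "set ys \<subseteq> {1..n} \<times> verts H"
    using ys by (simp add: legal_seq_def verts_lex_cycle_power)
  have "(g, z) \<in> closed_nbhd (lex_product (cycle_power n m) H) (g, h)"
    using z g hs(3) by (simp add: closed_nbhd_lex_cycle_power)
  moreover have "(g, z) \<notin> dominated (lex_product (cycle_power n m) H) ys"
    by (rule not_dominated_lex_cycle_power[OF ys_verts]) (use far in blast)
  moreover have "(g, z) \<notin> closed_nbhd (lex_product (cycle_power n m) H) (g, h')" if "h' \<in> set hs" for h'
  proof -
    have "h' \<in> verts H" using that hs(1) by (auto simp: legal_seq_def)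
    then show ?thesis using z that g by (auto simp: closed_nbhd_lex_cycle_power cycle_nbhd_def)
  qed
  ultimately have "\<not> closed_nbhd (lex_product (cycle_power n m) H) (g, h)
      \<subseteq> dominated (lex_product (cycle_power n m) H) (ys @ map (Pair g) hs)"
    by auto
  moreover have "(g, h) \<notin> set (ys @ map (Pair g) hs)" using far hs(2) by force
  moreover have "(g, h) \<in> verts (lex_product (cycle_power n m) H)"
    using g hs(3) by (simp add: verts_lex_cycle_power)
  ultimately have "legal_seq (lex_product (cycle_power n m) H) ((ys @ map (Pair g) hs) @ [(g, h)])"
    unfolding legal_seq_snoc using snoc.IH[OF hs(1)] by blast
  then show ?case by simp
qed (simp add: ys)

lemma legal_seq_snoc_lex_cycle_power:
  assumes ys: "legal_seq (lex_product (cycle_power n m) H) ys"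
    and a: "a \<in> {1..n}" and h: "h \<in> verts H" and w: "w \<in> cycle_nbhd n m a"
    and far: "\<And>u. u \<in> set ys \<Longrightarrow> fst u \<noteq> a \<and> fst u \<noteq> w \<and> w \<notin> cycle_nbhd n m (fst u)"
  shows "legal_seq (lex_product (cycle_power n m) H) (ys @ [(a, h)])"
proof -
  have ys_verts: "set ys \<subseteq> {1..n} \<times> verts H"
    using ys by (simp add: legal_seq_def verts_lex_cycle_power)
  have "(w, h) \<notin> dominated (lex_product (cycle_power n m) H) ys"
    by (rule not_dominated_lex_cycle_power[OF ys_verts]) (use far in blast)
  moreover have "(w, h) \<in> closed_nbhd (lex_product (cycle_power n m) H) (a, h)"
    using a h w by (simp add: closed_nbhd_lex_cycle_power)
  ultimately have "\<not> closed_nbhd (lex_product (cycle_power n m) H) (a, h)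
      \<subseteq> dominated (lex_product (cycle_power n m) H) ys"
    by blast
  moreover have "(a, h) \<notin> set ys" using far by force
  moreover have "(a, h) \<in> verts (lex_product (cycle_power n m) H)"
    using a h by (simp add: verts_lex_cycle_power)
  ultimately show ?thesis unfolding legal_seq_snoc using ys by blast
qed

text \<open>Full copies of a Grundy dominating sequence of \<open>H\<close> on the layers \<open>1\<close> and
  \<open>block_layer j\<close> (\<open>0 < j < p\<close>), which are pairwise more than \<open>m\<close> apart, and single vertices
  \<open>(a, hd hs)\<close> on the \<open>rest\<close> layers \<open>1 < a \<le> rest + 1\<close> in between, each with footprint
  \<open>(a + m, hd hs)\<close>.\<close>
locale lex_cycle_construction =
  fixes n m :: nat and H :: "'b graph" and p :: nat and hs :: "'b list"
  assumes positive_m: "0 < m" and two_blocks: "2 \<le> p" and blocks_fit: "p * (m + 1) \<le> n"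
    and grundy_hs: "grundy_dom_seq H hs" and nonempty_hs: "hs \<noteq> []"
begin

abbreviation "GH \<equiv> lex_product (cycle_power n m) H"

definition rest :: nat where "rest = n - p * (m + 1)"

definition block_layer :: "nat \<Rightarrow> nat" where "block_layer j = rest + 1 + j * (m + 1)"

definition construction :: "nat \<Rightarrow> (nat \<times> 'b) list" where
  "construction j = map (Pair 1) hs @ map (\<lambda>a. (a, hd hs)) [2..<rest + 2]
     @ concat (map (\<lambda>i. map (Pair (block_layer i)) hs) [1..<j])"

lemma legal_hs: "legal_seq H hs" and hs_verts: "set hs \<subseteq> verts H"
  using grundy_hs by (simp_all add: grundy_dom_seq_iff_legal_seq legal_seq_def)

lemma hd_hs: "hd hs \<in> set hs" "hd hs \<in> verts H"
  using nonempty_hs hs_verts by auto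

lemma rest_add: "rest + p * (m + 1) = n"
  using blocks_fit by (simp add: rest_def)

lemma rest_add_two_blocks: "rest + 2 * (m + 1) \<le> n"
  using rest_add mult_right_mono[OF two_blocks, of "m + 1"] by linarith

lemma block_layer_ge: "1 \<le> j \<Longrightarrow> rest + m + 2 \<le> block_layer j"
  using mult_right_mono[of 1 j "m + 1"] by (simp add: block_layer_def)

lemma block_layer_le: "j < p \<Longrightarrow> block_layer j + m \<le> n"
  using rest_add mult_right_mono[of "j + 1" p "m + 1"] by (simp add: block_layer_def)

lemma block_layer_gap: "i < j \<Longrightarrow> block_layer i + (m + 1) \<le> block_layer j"
  using mult_right_mono[of "i + 1" j "m + 1"] by (simp add: block_layer_def)

lemma legal_gap_prefix:
  "2 \<le> j \<Longrightarrow> j \<le> rest + 2 \<Longrightarrow> legal_seq GH (map (Pair 1) hs @ map (\<lambda>a. (a, hd hs)) [2..<j])"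
proof (induction j rule: dec_induct)
  case base
  show ?case
    using legal_seq_append_layer_copy[OF legal_seq_Nil legal_hs, of 1 n m] rest_add_two_blocks
    by simp
next
  case (step j)
  have j: "j \<in> {1..n}" "j + m \<in> {1..n}" "j + m \<in> cycle_nbhd n m j"
    using step rest_add_two_blocks positive_m by (auto intro: mem_cycle_nbhd_if_ahead)
  have "legal_seq GH ((map (Pair 1) hs @ map (\<lambda>a. (a, hd hs)) [2..<j]) @ [(j, hd hs)])"
  proof (rule legal_seq_snoc_lex_cycle_power[OF step.IH[OF Suc_leD[OF step.prems]] j(1) hd_hs(2) j(3)])
    fix u assume "u \<in> set (map (Pair 1) hs @ map (\<lambda>a. (a, hd hs)) [2..<j])"
    then have u: "fst u \<in> {1..<j}" using step.hyps by auto
    then have "j + m \<notin> cycle_nbhd n m (fst u)"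
      using step rest_add_two_blocks j by (intro not_mem_cycle_nbhd_if_far) auto
    with u show "fst u \<noteq> j \<and> fst u \<noteq> j + m \<and> j + m \<notin> cycle_nbhd n m (fst u)" by auto
  qed
  then show ?case using step.hyps by simp
qed

lemma fst_construction: "fst ` set (construction j) \<subseteq> {1..rest + 1} \<union> block_layer ` {1..<j}"
  unfolding construction_def using nonempty_hs by auto

lemma legal_construction: "1 \<le> j \<Longrightarrow> j \<le> p \<Longrightarrow> legal_seq GH (construction j)"
proof (induction j rule: dec_induct)
  case base
  then show ?case using legal_gap_prefix[of "rest + 2"] by (simp add: construction_def)
next
  case (step k)
  have k: "1 \<le> k" "k < p" using step by auto
  have g: "block_layer k \<in> {1..n}" using block_layer_le[OF k(2)] by (auto simp: block_layer_def)
  have "legal_seq GH (construction k @ map (Pair (block_layer k)) hs)"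
  proof (rule legal_seq_append_layer_copy[OF step.IH[OF Suc_leD[OF step.prems]] legal_hs g])
    fix u assume "u \<in> set (construction k)"
    then have "fst u \<in> {1..rest + 1} \<union> block_layer ` {1..<k}" using fst_construction by blast
    then obtain b where b: "fst u = b" "b \<in> {1..n}" "b + (m + 1) \<le> block_layer k"
      "block_layer k + (m + 1) \<le> b + n"
    proof
      assume u: "fst u \<in> {1..rest + 1}"
      show thesis
        using u block_layer_ge[OF k(1)] block_layer_le[OF k(2)] rest_add_two_blocks
        by (intro that[of "fst u"]) auto
    next
      assume "fst u \<in> block_layer ` {1..<k}"
      then obtain i where i: "1 \<le> i" "i < k" "fst u = block_layer i" by auto
      show thesis
        using i block_layer_gap[OF i(2)] block_layer_le[OF k(2)]
        by (intro that[of "block_layer i"]) (auto simp: block_layer_def)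
    qed
    then show "fst u \<noteq> block_layer k \<and> block_layer k \<notin> cycle_nbhd n m (fst u)"
      using g not_mem_cycle_nbhd_if_far[of b n "block_layer k" m] by auto
  qed
  then show ?case using step.hyps by (simp add: construction_def)
qed

lemma length_construction: "length (construction p) = p * length hs + rest"
proof -
  have "length (concat (map (\<lambda>i. map (Pair (block_layer i)) hs) [1..<p])) = (p - 1) * length hs"
    by (simp add: length_concat comp_def sum_list_triv)
  moreover have "length (map (\<lambda>a. (a, hd hs)) [2..<rest + 2]) = rest"
    by (simp only: length_map length_upt)
  moreover have "length hs + (p - 1) * length hs = p * length hs"
    using two_blocks by (cases p) auto
  ultimately show ?thesis
    by (simp only: construction_def length_append length_map length_upt diff_add_inverse2)
qed

definition full_layers :: "nat set" where "full_layers = insert 1 (block_layer ` {1..<p})"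

lemma full_layer_mem_construction: "g \<in> full_layers \<Longrightarrow> h \<in> set hs \<Longrightarrow> (g, h) \<in> set (construction p)"
  by (auto simp: full_layers_def construction_def)

lemma layer_mem_construction:
  assumes "b \<in> {1..rest + 1} \<union> block_layer ` {1..<p}"
  shows "(b, hd hs) \<in> set (construction p)"
proof -
  consider "b = 1" | "b \<in> {2..<rest + 2}" | "b \<in> block_layer ` {1..<p}"
    using assms by force
  then show ?thesis
    using hd_hs by cases (force simp: construction_def)+
qed

lemma full_or_near_construction_layer:
  assumes x: "x \<in> {1..n}"
  shows "x \<in> full_layers \<or> (\<exists>b \<in> {1..rest + 1} \<union> block_layer ` {1..<p}. x \<in> cycle_nbhd n m b)"
proof -
  have "1 \<le> x" using x by simp
  then consider "x = 1" | "2 \<le> x" "x \<le> rest + m + 1" | "rest + m + 2 \<le> x" by linarith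
  then show ?thesis
  proof cases
    case 1 then show ?thesis by (simp add: full_layers_def)
  next
    case 2
    define b where "b = (if x \<le> m + 1 then 1 else x - m)"
    have "b \<in> {1..rest + 1}" "x \<in> cycle_nbhd n m b"
      using 2 x rest_add_two_blocks positive_m
      by (auto simp: b_def intro!: mem_cycle_nbhd_if_ahead)
    then show ?thesis by blast
  next
    case 3
    define j where "j = (x - (rest + 1)) div (m + 1)"
    define r where "r = (x - (rest + 1)) mod (m + 1)"
    have x_eq: "x = block_layer j + r" and r: "r \<le> m"
      using 3 div_mult_mod_eq[of "x - (rest + 1)" "m + 1"]
      by (auto simp: j_def r_def block_layer_def algebra_simps)
    have j: "1 \<le> j" "j < p"
    proof -
      show "1 \<le> j"
      proof (rule ccontr)
        assume "\<not> 1 \<le> j"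
        then have "j = 0" by simp
        with 3 x_eq r show False by (simp add: block_layer_def)
      qed
      show "j < p"
      proof (rule ccontr)
        assume "\<not> j < p"
        then have "p * (m + 1) \<le> j * (m + 1)" by (intro mult_right_mono) auto
        then show False using x_eq x rest_add by (simp add: block_layer_def)
      qed
    qed
    show ?thesis
    proof (cases "r = 0")
      case True then show ?thesis using x_eq j by (simp add: full_layers_def)
    next
      case False
      have "block_layer j \<in> {1..n}" using x_eq x by (auto simp: block_layer_def)
      then have "x \<in> cycle_nbhd n m (block_layer j)"
        using x x_eq r False by (intro mem_cycle_nbhd_if_ahead) auto
      moreover have "block_layer j \<in> block_layer ` {1..<p}" using j by simp
      ultimately show ?thesis by blast
    qed
  qed
qed

lemma set_construction_subset: "set (construction p) \<subseteq> {1..n} \<times> verts H"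
  using legal_construction[of p] two_blocks by (simp add: legal_seq_def verts_lex_cycle_power)

lemma dominated_construction: "dominated GH (construction p) = verts GH"
proof (rule equalityI)
  show "dominated GH (construction p) \<subseteq> verts GH"
    using set_construction_subset by (intro dominated_subset_verts) (simp add: verts_lex_cycle_power)
next
  show "verts GH \<subseteq> dominated GH (construction p)"
  proof
    fix v assume "v \<in> verts GH"
    then obtain x h where v: "v = (x, h)" and x: "x \<in> {1..n}" and h: "h \<in> verts H"
      by (auto simp: verts_lex_cycle_power)
    from full_or_near_construction_layer[OF x]
    have "\<exists>u\<in>set (construction p). (x, h) \<in> closed_nbhd GH u"
    proof
      assume full: "x \<in> full_layers"
      obtain h' where h': "h' \<in> set hs" "h \<in> closed_nbhd H h'"
        using grundy_hs h by (auto simp: grundy_dom_seq_iff_legal_seq)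
      then have "(x, h) \<in> closed_nbhd GH (x, h')"
        using x hs_verts by (simp add: closed_nbhd_lex_cycle_power subset_iff)
      moreover have "(x, h') \<in> set (construction p)"
        using full_layer_mem_construction[OF full h'(1)] .
      ultimately show ?thesis by blast
    next
      assume "\<exists>b \<in> {1..rest + 1} \<union> block_layer ` {1..<p}. x \<in> cycle_nbhd n m b"
      then obtain b where b: "b \<in> {1..rest + 1} \<union> block_layer ` {1..<p}" "x \<in> cycle_nbhd n m b"
        by blast
      have u: "(b, hd hs) \<in> set (construction p)" using b(1) by (rule layer_mem_construction)
      then have "b \<in> {1..n}" using set_construction_subset by auto
      then have "(x, h) \<in> closed_nbhd GH (b, hd hs)"
        using b(2) h hd_hs(2) by (simp add: closed_nbhd_lex_cycle_power)
      with u show ?thesis by blast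
    qed
    then show "v \<in> dominated GH (construction p)" using v by blast
  qed
qed

lemma grundy_dom_seq_construction: "grundy_dom_seq GH (construction p)"
  using legal_construction[of p] two_blocks dominated_construction
  by (simp add: grundy_dom_seq_iff_legal_seq)

end

definition lex_cycle_bound :: "nat \<Rightarrow> nat \<Rightarrow> nat \<Rightarrow> nat" where
  "lex_cycle_bound n m k =
    (if k \<ge> m + 1 then n div (m + 1) * (k - (m + 1)) + n else 2 * k + n - (2 * m + 2))"

lemma le_lex_cycle_bound:
  fixes L k i u n m :: nat
  assumes L: "L \<le> k * i + u" and windows: "(m + 1) * i + u \<le> n" and balls: "2 * m + 1 + u \<le> n"
    and k: "1 \<le> k"
  shows "L \<le> lex_cycle_bound n m k"
proof (cases "k \<ge> m + 1")
  case True
  have "i * (m + 1) \<le> n" using windows by (metis add_leD1 mult.commute)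
  then have "i \<le> n div (m + 1)" by (simp add: less_eq_div_iff_mult_less_eq)
  then have "(k - (m + 1)) * i \<le> (k - (m + 1)) * (n div (m + 1))"
    by (rule mult_left_mono) simp
  moreover have "k * i = (m + 1) * i + (k - (m + 1)) * i"
    using True by (metis add_mult_distrib le_add_diff_inverse)
  ultimately have "L \<le> n + (k - (m + 1)) * (n div (m + 1))"
    using L windows by linarith
  then show ?thesis
    using True by (simp add: lex_cycle_bound_def mult.commute)
next
  case False
  define d where "d = m + 1 - k"
  have md: "m + 1 = k + d" using False by (simp add: d_def)
  show ?thesis
  proof (cases "2 \<le> i")
    case True
    then have "d * 2 \<le> d * i" by (intro mult_left_mono) simp_all
    moreover have "(m + 1) * i = k * i + d * i" unfolding md by (rule add_mult_distrib)
    ultimately have "L + 2 * d \<le> n" using L windows by linarith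
    then show ?thesis using False md by (simp add: lex_cycle_bound_def)
  next
    case False
    then have "k * i \<le> k" by (cases i) (auto simp: less_Suc_eq)
    then have "L + (2 * m + 2) \<le> 2 * k + n" using L balls k by linarith
    then show ?thesis using \<open>\<not> k \<ge> m + 1\<close> by (simp add: lex_cycle_bound_def)
  qed
qed

theorem grundy_dom_number_lex_cycle_power_le:
  assumes "2 * m < n" "finite (verts H)" "verts H \<noteq> {}"
  shows "grundy_dom_number (lex_product (cycle_power n m) H) \<le> lex_cycle_bound n m (grundy_dom_number H)"
proof -
  have "finite (verts (lex_product (cycle_power n m) H))"
    using assms(2) by (simp add: verts_lex_cycle_power)
  then obtain xs where xs: "grundy_dom_seq (lex_product (cycle_power n m) H) xs"
    "length xs = grundy_dom_number (lex_product (cycle_power n m) H)"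
    by (rule grundy_dom_number_attained)
  interpret lex_cycle_legal_seq n m H xs
    using assms xs(1) by unfold_locales (simp_all add: grundy_dom_seq_iff_legal_seq)
  show ?thesis
    using le_lex_cycle_bound[OF length_le_fresh_layers_outer_spills fresh_layers_outer_spills_le
        outer_spills_le] grundy_dom_number_pos[OF assms(2,3)] xs(2)
    by simp
qed

lemma grundy_dom_number_lex_cycle_power_ge_blocks:
  assumes "0 < m" "2 \<le> p" "p * (m + 1) \<le> n" "finite (verts H)" "verts H \<noteq> {}"
  shows "p * grundy_dom_number H + (n - p * (m + 1)) \<le> grundy_dom_number (lex_product (cycle_power n m) H)"
proof -
  obtain hs where hs: "grundy_dom_seq H hs" "length hs = grundy_dom_number H"
    using grundy_dom_number_attained[OF assms(4)] .
  interpret lex_cycle_construction n m H p hs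
    using assms hs grundy_dom_seq_nonempty[OF assms(5)] by unfold_locales auto
  have "finite (verts GH)"
    using assms(4) by (simp add: verts_lex_cycle_power)
  from grundy_dom_seq_length_le[OF this grundy_dom_seq_construction] show ?thesis
    using hs(2) by (simp add: length_construction rest_def)
qed

theorem lex_cycle_bound_le_grundy_dom_number_lex_cycle_power:
  assumes "0 < m" "2 * (m + 1) \<le> n" "finite (verts H)" "verts H \<noteq> {}"
  shows "lex_cycle_bound n m (grundy_dom_number H) \<le> grundy_dom_number (lex_product (cycle_power n m) H)"
proof (cases "grundy_dom_number H \<ge> m + 1")
  case True
  let ?p = "n div (m + 1)"
  have "2 \<le> ?p"
    using assms(2) by (simp add: less_eq_div_iff_mult_less_eq)
  moreover have "?p * (m + 1) \<le> n" by (rule div_times_less_eq_dividend)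
  moreover have "?p * grundy_dom_number H = ?p * (grundy_dom_number H - (m + 1)) + ?p * (m + 1)"
    using True by (metis add_mult_distrib2 le_add_diff_inverse2)
  ultimately show ?thesis
    using grundy_dom_number_lex_cycle_power_ge_blocks[of m ?p n H] assms True
    by (simp add: lex_cycle_bound_def)
next
  case False
  then show ?thesis
    using grundy_dom_number_lex_cycle_power_ge_blocks[of m 2 n H] assms
    by (simp add: lex_cycle_bound_def)
qed

theorem theorem3:
  fixes n m :: nat and H :: "'b graph"
  assumes "0 < n" and "0 < m" and "2 * (m + 1) \<le> n"
    and "finite_simple_graph H" and "verts H \<noteq> {}"
  shows "grundy_dom_number (lex_product (cycle_power n m) H) =
    (if grundy_dom_number H \<ge> m + 1
     then (n div (m + 1)) * (grundy_dom_number H - (m + 1)) + n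
     else 2 * grundy_dom_number H + n - (2 * m + 2))"
proof -
  have finite_H: "finite (verts H)" using assms(4) by (simp add: finite_simple_graph_def)
  have "grundy_dom_number (lex_product (cycle_power n m) H) \<le> lex_cycle_bound n m (grundy_dom_number H)"
    using grundy_dom_number_lex_cycle_power_le[OF _ finite_H assms(5)] assms(3) by simp
  moreover have "lex_cycle_bound n m (grundy_dom_number H) \<le> grundy_dom_number (lex_product (cycle_power n m) H)"
    using lex_cycle_bound_le_grundy_dom_number_lex_cycle_power[OF assms(2,3) finite_H assms(5)] .
  ultimately show ?thesis unfolding lex_cycle_bound_def by (rule antisym)
qed

end
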